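(* The following are equivalent: (i) $S$ is strongly graded, i.e. $S_gS_h=S_{gh}$ for all $g,h\in G$; (ii) $S$ is symmetrically graded and, for every $g\in G$, every symmetrically graded left $S$-module $M$ with $M_g=0$ is the zero module.
   Context: $G$ is a group with identity $e$; $S=\bigoplus_{g\in G}S_g$ is an associative unital ring graded by $G$ ($S_gS_h\subseteq S_{gh}$), $R=S_e$, and $XY$ denotes the set of finite sums of products $xy$, $x\in X$, $y\in Y$. $S$ is symmetrically graded if $S_gS_{g^{-1}}S_g=S_g$ for every $g\in G$. A graded left $S$-module is $M=\bigoplus_g M_g$ with $S_gM_h\subseteq M_{gh}$; it is (left) symmetrically graded if $M_g=S_gS_{g^{-1}}M_g$ for every $g\in G$. *)

theory Defs
  imports Main
begin

text \<open>The group G is written additively via the type class group_add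
(not assumed commutative): identity e = 0, product g h = g + h, inverse = -g.\<close>

definition add_subgroup :: "'a::ring_1 set \<Rightarrow> bool" where
  "add_subgroup A \<longleftrightarrow> 0 \<in> A \<and> (\<forall>x\<in>A. \<forall>y\<in>A. x + y \<in> A) \<and> (\<forall>x\<in>A. - x \<in> A)"

definition graded_ring :: "('g::group_add \<Rightarrow> 'a::ring_1 set) \<Rightarrow> bool" where
  "graded_ring Sg \<longleftrightarrow>
     (\<forall>g. add_subgroup (Sg g)) \<and>
     (\<forall>g h. \<forall>x\<in>Sg g. \<forall>y\<in>Sg h. x * y \<in> Sg (g + h)) \<and>
     (\<forall>x. \<exists>H c. finite H \<and> (\<forall>h\<in>H. c h \<in> Sg h) \<and> x = (\<Sum>h\<in>H. c h)) \<and>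
     (\<forall>H c. finite H \<and> (\<forall>h\<in>H. c h \<in> Sg h) \<and> (\<Sum>h\<in>H. c h) = 0 \<longrightarrow> (\<forall>h\<in>H. c h = 0))"

definition setmul :: "'a::ring_1 set \<Rightarrow> 'a set \<Rightarrow> 'a set" where
  "setmul X Y = {(\<Sum>i<n. f i * h i) | (n::nat) (f::nat \<Rightarrow> 'a) h. \<forall>i<n. f i \<in> X \<and> h i \<in> Y}"

definition strongly_graded :: "('g::group_add \<Rightarrow> 'a::ring_1 set) \<Rightarrow> bool" where
  "strongly_graded Sg \<longleftrightarrow> (\<forall>g h. setmul (Sg g) (Sg h) = Sg (g + h))"

definition symmetrically_graded :: "('g::group_add \<Rightarrow> 'a::ring_1 set) \<Rightarrow> bool" where
  "symmetrically_graded Sg \<longleftrightarrow> (\<forall>g. setmul (setmul (Sg g) (Sg (- g))) (Sg g) = Sg g)"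

text \<open>A left S-module given explicitly: carrier M, addition add, zero z, scalar action sm.\<close>
definition left_module :: "'m set \<Rightarrow> ('m \<Rightarrow> 'm \<Rightarrow> 'm) \<Rightarrow> 'm \<Rightarrow> ('a::ring_1 \<Rightarrow> 'm \<Rightarrow> 'm) \<Rightarrow> bool" where
  "left_module M add z sm \<longleftrightarrow>
     z \<in> M \<and>
     (\<forall>x\<in>M. \<forall>y\<in>M. add x y \<in> M) \<and>
     (\<forall>x\<in>M. \<forall>y\<in>M. \<forall>w\<in>M. add (add x y) w = add x (add y w)) \<and>
     (\<forall>x\<in>M. \<forall>y\<in>M. add x y = add y x) \<and>
     (\<forall>x\<in>M. add z x = x) \<and>
     (\<forall>x\<in>M. \<exists>y\<in>M. add x y = z) \<and>
     (\<forall>a. \<forall>x\<in>M. sm a x \<in> M) \<and>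
     (\<forall>a. \<forall>x\<in>M. \<forall>y\<in>M. sm a (add x y) = add (sm a x) (sm a y)) \<and>
     (\<forall>a b. \<forall>x\<in>M. sm (a + b) x = add (sm a x) (sm b x)) \<and>
     (\<forall>a b. \<forall>x\<in>M. sm (a * b) x = sm a (sm b x)) \<and>
     (\<forall>x\<in>M. sm 1 x = x)"

definition msum :: "('m \<Rightarrow> 'm \<Rightarrow> 'm) \<Rightarrow> 'm \<Rightarrow> 'm list \<Rightarrow> 'm" where
  "msum add z xs = foldr add xs z"

definition graded_left_module ::
  "('g::group_add \<Rightarrow> 'a::ring_1 set) \<Rightarrow> 'm set \<Rightarrow> ('m \<Rightarrow> 'm \<Rightarrow> 'm) \<Rightarrow> 'm \<Rightarrow> ('a \<Rightarrow> 'm \<Rightarrow> 'm) \<Rightarrow> ('g \<Rightarrow> 'm set) \<Rightarrow> bool" where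
  "graded_left_module Sg M add z sm Mg \<longleftrightarrow>
     left_module M add z sm \<and>
     (\<forall>h. Mg h \<subseteq> M \<and> z \<in> Mg h \<and> (\<forall>x\<in>Mg h. \<forall>y\<in>Mg h. add x y \<in> Mg h) \<and>
          (\<forall>x\<in>Mg h. \<exists>y\<in>Mg h. add x y = z)) \<and>
     (\<forall>g h. \<forall>s\<in>Sg g. \<forall>x\<in>Mg h. sm s x \<in> Mg (g + h)) \<and>
     (\<forall>x\<in>M. \<exists>hs xs. length xs = length hs \<and> (\<forall>i<length hs. xs ! i \<in> Mg (hs ! i)) \<and>
                      x = msum add z xs) \<and>
     (\<forall>hs xs. distinct hs \<and> length xs = length hs \<and> (\<forall>i<length hs. xs ! i \<in> Mg (hs ! i)) \<and>
              msum add z xs = z \<longrightarrow> (\<forall>i<length hs. xs ! i = z))"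

definition setsmul :: "('m \<Rightarrow> 'm \<Rightarrow> 'm) \<Rightarrow> 'm \<Rightarrow> ('a::ring_1 \<Rightarrow> 'm \<Rightarrow> 'm) \<Rightarrow> 'a set \<Rightarrow> 'm set \<Rightarrow> 'm set" where
  "setsmul add z sm X N = {msum add z (map (\<lambda>(s, x). sm s x) ps) | ps. \<forall>p\<in>set ps. fst p \<in> X \<and> snd p \<in> N}"

definition sym_graded_module ::
  "('g::group_add \<Rightarrow> 'a::ring_1 set) \<Rightarrow> ('m \<Rightarrow> 'm \<Rightarrow> 'm) \<Rightarrow> 'm \<Rightarrow> ('a \<Rightarrow> 'm \<Rightarrow> 'm) \<Rightarrow> ('g \<Rightarrow> 'm set) \<Rightarrow> bool" where
  "sym_graded_module Sg add z sm Mg \<longleftrightarrow>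
     (\<forall>g. Mg g = setsmul add z sm (setmul (Sg g) (Sg (- g))) (Mg g))"

end

theory Submission
  imports Defs
begin

text \<open>If \<open>S\<close> is strongly graded, then \<open>1 \<in> S\<^sub>k S\<^sub>-\<^sub>k\<close> for every \<open>k\<close>, so every homogeneous
  element \<open>m\<close> of a graded module is a sum \<open>\<Sum> a\<^sub>i (b\<^sub>i m)\<close> with all \<open>b\<^sub>i m\<close> of any prescribed
  degree \<open>g\<close>; hence \<open>M\<^sub>g = 0\<close> forces \<open>M = 0\<close>.
  Conversely, fix \<open>g\<close>. The left ideal \<open>S S\<^sub>g\<close> is graded, with degree-\<open>h\<close> part \<open>S\<^sub>h\<^sub>-\<^sub>g S\<^sub>g\<close>, so
  \<open>S / S S\<^sub>g\<close> is a graded module, symmetrically graded because \<open>S\<close> is, and zero in degree \<open>g\<close>.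
  By hypothesis it is zero, i.e. \<open>1 \<in> S S\<^sub>g\<close>, and the degree-\<open>0\<close> component of \<open>1\<close> shows
  \<open>1 \<in> S\<^sub>-\<^sub>g S\<^sub>g\<close>. Having this for all \<open>g\<close> is equivalent to strong grading.\<close>

lemma graded_ring_zero: "graded_ring Sg \<Longrightarrow> 0 \<in> Sg g"
  by (simp add: graded_ring_def add_subgroup_def)

lemma graded_ring_add: "graded_ring Sg \<Longrightarrow> x \<in> Sg g \<Longrightarrow> y \<in> Sg g \<Longrightarrow> x + y \<in> Sg g"
  by (simp add: graded_ring_def add_subgroup_def)

lemma graded_ring_minus: "graded_ring Sg \<Longrightarrow> x \<in> Sg g \<Longrightarrow> - x \<in> Sg g"
  by (simp add: graded_ring_def add_subgroup_def)

lemma graded_ring_diff: "graded_ring Sg \<Longrightarrow> x \<in> Sg g \<Longrightarrow> y \<in> Sg g \<Longrightarrow> x - y \<in> Sg g"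
  by (metis diff_conv_add_uminus graded_ring_add graded_ring_minus)

lemma graded_ring_sum:
  "graded_ring Sg \<Longrightarrow> (\<And>i. i \<in> I \<Longrightarrow> c i \<in> Sg g) \<Longrightarrow> sum c I \<in> Sg g"
  by (induction I rule: infinite_finite_induct) (auto simp: graded_ring_zero graded_ring_add)

lemma graded_ring_mult: "graded_ring Sg \<Longrightarrow> x \<in> Sg g \<Longrightarrow> y \<in> Sg h \<Longrightarrow> x * y \<in> Sg (g + h)"
  by (simp add: graded_ring_def)

definition internal_sum :: "('g \<Rightarrow> 'a::comm_monoid_add set) \<Rightarrow> 'a set" where
  "internal_sum A = {sum l F | F l. finite F \<and> (\<forall>h\<in>F. l h \<in> A h)}"

lemma internal_sumI: "finite F \<Longrightarrow> (\<And>h. h \<in> F \<Longrightarrow> l h \<in> A h) \<Longrightarrow> sum l F \<in> internal_sum A"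
  unfolding internal_sum_def by blast

lemma internal_sumE:
  assumes "x \<in> internal_sum A"
  obtains F l where "finite F" "\<And>h. h \<in> F \<Longrightarrow> l h \<in> A h" "x = sum l F"
  using assms unfolding internal_sum_def by blast

lemma graded_ring_decomp: "graded_ring Sg \<Longrightarrow> x \<in> internal_sum Sg"
  unfolding graded_ring_def internal_sum_def by (elim conjE allE[of _ x]) blast

lemma sum_if_mem_superset:
  "finite B \<Longrightarrow> A \<subseteq> B \<Longrightarrow> (\<Sum>x\<in>B. if x \<in> A then f x else 0) = sum f A"
  by (simp add: sum.inter_restrict[symmetric] Int_absorb1)

lemma internal_sum_add:
  assumes zero: "\<And>h. 0 \<in> A h" and add: "\<And>h x y. x \<in> A h \<Longrightarrow> y \<in> A h \<Longrightarrow> x + y \<in> A h"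
    and "x \<in> internal_sum A" "y \<in> internal_sum A"
  shows "x + y \<in> internal_sum A"
proof -
  obtain F1 l1 where 1: "finite F1" "\<And>h. h \<in> F1 \<Longrightarrow> l1 h \<in> A h" "x = sum l1 F1"
    using assms(3) by (erule internal_sumE)
  obtain F2 l2 where 2: "finite F2" "\<And>h. h \<in> F2 \<Longrightarrow> l2 h \<in> A h" "y = sum l2 F2"
    using assms(4) by (erule internal_sumE)
  define e1 where "e1 h = (if h \<in> F1 then l1 h else 0)" for h
  define e2 where "e2 h = (if h \<in> F2 then l2 h else 0)" for h
  have "x = sum e1 (F1 \<union> F2)" "y = sum e2 (F1 \<union> F2)"
    using 1 2 by (simp_all add: e1_def e2_def sum_if_mem_superset)
  hence "x + y = (\<Sum>h\<in>F1 \<union> F2. e1 h + e2 h)" by (simp add: sum.distrib)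
  moreover have "e1 h + e2 h \<in> A h" for h
    using 1 2 zero add by (simp add: e1_def e2_def)
  ultimately show ?thesis using 1 2 by (simp add: internal_sumI)
qed

lemma internal_sum_sum:
  assumes zero: "\<And>h. 0 \<in> A h" and add: "\<And>h x y. x \<in> A h \<Longrightarrow> y \<in> A h \<Longrightarrow> x + y \<in> A h"
  shows "(\<And>i. i \<in> I \<Longrightarrow> f i \<in> internal_sum A) \<Longrightarrow> sum f I \<in> internal_sum A"
proof (induction I rule: infinite_finite_induct)
  case (insert i I)
  thus ?case by (simp, intro internal_sum_add[of A]) (use zero add in auto)
qed (use internal_sumI[of "{}"] in auto)

lemma graded_ring_independent:
  "graded_ring Sg \<Longrightarrow> finite H \<Longrightarrow> (\<And>h. h \<in> H \<Longrightarrow> c h \<in> Sg h) \<Longrightarrow> sum c H = 0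
    \<Longrightarrow> h \<in> H \<Longrightarrow> c h = 0"
  unfolding graded_ring_def by (elim conjE allE[of _ H] allE[of _ c]) blast

lemma graded_ring_component_eq:
  assumes gr: "graded_ring Sg" and "finite H" "finite K"
    and c: "\<And>h. h \<in> H \<Longrightarrow> c h \<in> Sg h" and d: "\<And>h. h \<in> K \<Longrightarrow> d h \<in> Sg h"
    and eq: "sum c H = sum d K" and h: "h \<in> H"
  shows "c h = (if h \<in> K then d h else 0)"
proof -
  define e where "e h = (if h \<in> H then c h else 0) - (if h \<in> K then d h else 0)" for h
  have "sum e (H \<union> K) = sum c H - sum d K"
    using assms(2,3) by (simp add: e_def sum_subtractf sum_if_mem_superset)
  hence "sum e (H \<union> K) = 0" using eq by simp
  moreover have "e k \<in> Sg k" for k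
    using c d graded_ring_zero[OF gr] graded_ring_diff[OF gr] by (simp add: e_def)
  ultimately have "e h = 0"
    using graded_ring_independent[OF gr, of "H \<union> K" e h] assms(2,3) h by simp
  thus ?thesis using h by (simp add: e_def)
qed

lemma graded_ring_one: assumes gr: "graded_ring Sg" shows "1 \<in> Sg 0"
proof -
  obtain H c where H: "finite H" "\<And>h. h \<in> H \<Longrightarrow> c h \<in> Sg h" "1 = sum c H"
    using graded_ring_decomp[OF gr, of 1] by (erule internal_sumE)
  txt \<open>Multiplying \<open>1 = \<Sum>c\<close> on the left by a homogeneous \<open>s\<close> of degree \<open>k\<close> shifts
    every degree by \<open>k\<close>; comparing degrees, \<open>s * c h = 0\<close> unless \<open>h = 0\<close>.\<close>
  have shift: "s * c h = 0" if s: "s \<in> Sg k" and h: "h \<in> H" "h \<noteq> 0" for s k h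
  proof -
    have inj: "inj_on ((+) k) H" by (auto intro: inj_onI)
    have "(\<Sum>u\<in>(+) k ` H. s * c (- k + u)) = s * sum c H"
      by (simp add: sum.reindex[OF inj] add.assoc[symmetric] sum_distrib_left)
    also have "\<dots> = (\<Sum>u\<in>{k}. s)" using H(3) by simp
    finally have "s * c (- k + (k + h)) = (if k + h \<in> {k} then s else 0)"
      using H s h(1) graded_ring_mult[OF gr]
      by (intro graded_ring_component_eq[OF gr]) (auto simp: add.assoc[symmetric])
    moreover have "k + h \<noteq> k" using h(2) by (metis add.right_neutral add_left_cancel)
    ultimately show ?thesis by (simp add: add.assoc[symmetric])
  qed
  have "c h = 0" if "h \<in> H" "h \<noteq> 0" for h
  proof -
    have "c h = (\<Sum>k\<in>H. c k * c h)" by (simp add: H(3)[symmetric] sum_distrib_right[symmetric])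
    also have "\<dots> = 0" using shift H(2) that by (auto intro!: sum.neutral)
    finally show ?thesis .
  qed
  hence "sum c H = sum c (H \<inter> {0})" using H(1) by (intro sum.mono_neutral_right) auto
  hence "1 = sum c (H \<inter> {0})" using H(3) by simp
  thus ?thesis using H(2)[of 0] graded_ring_zero[OF gr] by (cases "0 \<in> H") auto
qed

lemma setmulI: "(\<And>i. i < (n::nat) \<Longrightarrow> f i \<in> X \<and> h i \<in> Y) \<Longrightarrow> (\<Sum>i<n. f i * h i) \<in> setmul X Y"
  unfolding setmul_def by blast

lemma setmulE:
  assumes "u \<in> setmul X Y"
  obtains n f h where "\<And>i. i < (n::nat) \<Longrightarrow> f i \<in> X \<and> h i \<in> Y" "u = (\<Sum>i<n. f i * h i)"
  using assms unfolding setmul_def by blast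

lemma setmul_zero: "0 \<in> setmul X Y"
  using setmulI[where n=0 and X=X and Y=Y] by simp

lemma mult_in_setmul: "x \<in> X \<Longrightarrow> y \<in> Y \<Longrightarrow> x * y \<in> setmul X Y"
  using setmulI[where n=1 and f="\<lambda>_. x" and h="\<lambda>_. y"] by simp

lemma sum_lessThan_add: "(\<Sum>i<n + m. g i) = (\<Sum>i<n. g i) + (\<Sum>i<(m::nat). g (n + i))"
  by (induction m) (simp_all add: add.assoc)

lemma setmul_add:
  assumes "u \<in> setmul X Y" "v \<in> setmul X Y"
  shows "u + v \<in> setmul X Y"
proof -
  obtain n f h where u: "\<And>i. i < (n::nat) \<Longrightarrow> f i \<in> X \<and> h i \<in> Y" "u = (\<Sum>i<n. f i * h i)"
    using assms(1) by (erule setmulE)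
  obtain m f' h' where v: "\<And>i. i < (m::nat) \<Longrightarrow> f' i \<in> X \<and> h' i \<in> Y" "v = (\<Sum>i<m. f' i * h' i)"
    using assms(2) by (erule setmulE)
  define F where "F i = (if i < n then f i else f' (i - n))" for i
  define K where "K i = (if i < n then h i else h' (i - n))" for i
  have "u + v = (\<Sum>i<n + m. F i * K i)"
    unfolding sum_lessThan_add using u v by (simp add: F_def K_def)
  moreover have "F i \<in> X \<and> K i \<in> Y" if "i < n + m" for i
    using u v that by (simp add: F_def K_def)
  ultimately show ?thesis using setmulI[of "n + m" F X K Y] by simp
qed

lemma setmul_subset_left_ideal: "setmul X Y \<subseteq> setmul UNIV Y"
  unfolding setmul_def by blast

lemma left_ideal_mult:
  assumes "x \<in> setmul UNIV Y"
  shows "s * x \<in> setmul UNIV Y"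
proof -
  obtain n f h where "\<And>i. i < (n::nat) \<Longrightarrow> f i \<in> UNIV \<and> h i \<in> Y" "x = (\<Sum>i<n. f i * h i)"
    using assms by (erule setmulE)
  thus ?thesis
    using setmulI[where f="\<lambda>i. s * f i" and h=h] by (simp add: sum_distrib_left mult.assoc)
qed

lemma left_ideal_minus: "x \<in> setmul UNIV Y \<Longrightarrow> - x \<in> setmul UNIV Y"
  using left_ideal_mult[of x Y "- 1"] by simp

lemma graded_setmul_subset: "graded_ring Sg \<Longrightarrow> setmul (Sg g) (Sg h) \<subseteq> Sg (g + h)"
  unfolding setmul_def by (auto intro!: graded_ring_sum graded_ring_mult)

lemma strongly_graded_iff_one_in_setmul:
  assumes gr: "graded_ring Sg"
  shows "strongly_graded Sg \<longleftrightarrow> (\<forall>g. 1 \<in> setmul (Sg g) (Sg (- g)))"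
proof
  assume "strongly_graded Sg"
  thus "\<forall>g. 1 \<in> setmul (Sg g) (Sg (- g))"
    using graded_ring_one[OF gr] by (simp add: strongly_graded_def)
next
  assume one: "\<forall>g. 1 \<in> setmul (Sg g) (Sg (- g))"
  have "x \<in> setmul (Sg g) (Sg h)" if x: "x \<in> Sg (g + h)" for g h x
  proof -
    obtain n a b where ab: "\<And>i. i < (n::nat) \<Longrightarrow> a i \<in> Sg g \<and> b i \<in> Sg (- g)" "1 = (\<Sum>i<n. a i * b i)"
      using one[rule_format, of g] by (erule setmulE)
    have "x = (\<Sum>i<n. a i * (b i * x))"
      by (simp add: ab(2)[symmetric] sum_distrib_right[symmetric] mult.assoc[symmetric])
    moreover have "b i * x \<in> Sg h" if "i < n" for i
      using graded_ring_mult[OF gr _ x] ab(1)[OF that] by (metis minus_add_cancel)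
    ultimately show ?thesis using ab(1) setmulI[of n a "Sg g" "\<lambda>i. b i * x" "Sg h"] by simp
  qed
  thus "strongly_graded Sg"
    using graded_setmul_subset[OF gr] unfolding strongly_graded_def by (simp add: set_eq_subset subset_iff)
qed

lemma strongly_graded_imp_symmetrically_graded:
  "strongly_graded Sg \<Longrightarrow> symmetrically_graded Sg"
  by (simp add: strongly_graded_def symmetrically_graded_def)

lemma left_module_smult_zero:
  assumes lm: "left_module M add z sm" and m: "m \<in> M"
  shows "sm 0 m = z"
proof -
  note A = lm[unfolded left_module_def]
  let ?u = "sm 0 m"
  have uM: "?u \<in> M" using A m by blast
  have uu: "?u = add ?u ?u" using A m by (metis add_0)
  have "\<forall>x\<in>M. \<exists>y\<in>M. add x y = z" using A by blast
  then obtain y where y: "y \<in> M" "add ?u y = z" using uM by blast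
  have "z = add (add ?u ?u) y" using uu y by simp
  also have "\<dots> = add ?u z" using A uM y by metis
  also have "\<dots> = ?u" using A uM by metis
  finally show ?thesis by simp
qed

lemma left_module_smult_zero_right:
  assumes lm: "left_module M add z sm"
  shows "sm a z = z"
proof -
  note A = lm[unfolded left_module_def]
  have zM: "z \<in> M" using A by blast
  hence "sm a z = sm a (sm 0 z)" using left_module_smult_zero[OF lm] by simp
  also have "\<dots> = sm (a * 0) z" using A zM by metis
  also have "\<dots> = z" using left_module_smult_zero[OF lm zM] by simp
  finally show ?thesis .
qed

lemma left_module_smult_sum_eq_zero:
  assumes lm: "left_module M add z sm" and m: "m \<in> M"
  shows "(\<And>i. i < (n::nat) \<Longrightarrow> sm (c i) m = z) \<Longrightarrow> sm (\<Sum>i<n. c i) m = z"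
proof (induction n)
  case 0
  show ?case using left_module_smult_zero[OF lm m] by simp
next
  case (Suc n)
  thus ?case using lm m unfolding left_module_def by simp
qed

lemma left_module_msum_eq_zero:
  assumes "left_module M add z sm"
  shows "(\<And>y. y \<in> set xs \<Longrightarrow> y = z) \<Longrightarrow> msum add z xs = z"
proof -
  have "add z z = z" using assms unfolding left_module_def by blast
  thus "(\<And>y. y \<in> set xs \<Longrightarrow> y = z) \<Longrightarrow> msum add z xs = z"
    by (induction xs) (auto simp: msum_def)
qed

lemma graded_module_trivial_if_component_trivial:
  assumes gm: "graded_left_module Sg M add z sm Mg"
    and one: "\<And>k. 1 \<in> setmul (Sg k) (Sg (- k))" and Mg: "Mg g = {z}"
  shows "M = {z}"
proof -
  have lm: "left_module M add z sm"
    using gm unfolding graded_left_module_def by blast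
  have MgM: "\<And>h. Mg h \<subseteq> M"
    using gm unfolding graded_left_module_def by blast
  have act: "\<And>s x g h. s \<in> Sg g \<Longrightarrow> x \<in> Mg h \<Longrightarrow> sm s x \<in> Mg (g + h)"
    using gm unfolding graded_left_module_def by blast
  have decomp: "\<forall>x\<in>M. \<exists>hs xs. length xs = length hs \<and> (\<forall>i<length hs. xs ! i \<in> Mg (hs ! i)) \<and>
                      x = msum add z xs"
    using gm unfolding graded_left_module_def by blast
  have smult_assoc: "\<And>a b x. x \<in> M \<Longrightarrow> sm (a * b) x = sm a (sm b x)"
    and smult_one: "\<And>x. x \<in> M \<Longrightarrow> sm 1 x = x" and zM: "z \<in> M"
    using lm unfolding left_module_def by blast+
  have homogeneous_zero: "m = z" if m: "m \<in> Mg h" for h m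
  proof -
    obtain n a b where ab: "\<And>i. i < (n::nat) \<Longrightarrow> a i \<in> Sg (h + - g) \<and> b i \<in> Sg (- (h + - g))"
      "1 = (\<Sum>i<n. a i * b i)"
      using one[of "h + - g"] by (erule setmulE)
    have mM: "m \<in> M" using m MgM by blast
    have deg: "- (h + - g) + h = g" by (simp add: minus_add add.assoc)
    have "sm (b i) m \<in> Mg g" if "i < n" for i
      using act[of "b i" "- (h + - g)" m h] ab(1)[OF that] m unfolding deg by blast
    hence "sm (a i * b i) m = z" if "i < n" for i
      using that mM Mg smult_assoc left_module_smult_zero_right[OF lm] by simp
    hence "sm 1 m = z" unfolding ab(2) by (rule left_module_smult_sum_eq_zero[OF lm mM])
    thus ?thesis using smult_one mM by simp
  qed
  have "x = z" if "x \<in> M" for x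
  proof -
    obtain hs xs where xs: "length xs = length hs" "\<forall>i<length hs. xs ! i \<in> Mg (hs ! i)"
      "x = msum add z xs"
      using decomp \<open>x \<in> M\<close> by blast
    have "y = z" if "y \<in> set xs" for y
      using that xs(1,2) homogeneous_zero by (metis in_set_conv_nth)
    thus ?thesis using left_module_msum_eq_zero[OF lm] xs(3) by blast
  qed
  thus ?thesis using zM by blast
qed

lemma mult_homogeneous_in_internal_sum:
  assumes gr: "graded_ring Sg" and y: "y \<in> Sg g"
  shows "s * y \<in> internal_sum (\<lambda>h. setmul (Sg (h - g)) (Sg g))"
proof -
  obtain K c where K: "finite K" "\<And>k. k \<in> K \<Longrightarrow> c k \<in> Sg k" "s = sum c K"
    using graded_ring_decomp[OF gr, of s] by (erule internal_sumE)
  have inj: "inj_on (\<lambda>k. k + g) K" by (auto intro: inj_onI)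
  have "s * y = (\<Sum>h\<in>(\<lambda>k. k + g) ` K. c (h - g) * y)"
    using K(3) by (simp add: sum.reindex[OF inj] sum_distrib_right)
  moreover have "c (h - g) * y \<in> setmul (Sg (h - g)) (Sg g)" if "h \<in> (\<lambda>k. k + g) ` K" for h
    using that K(2) y by (auto intro: mult_in_setmul)
  ultimately show ?thesis using K(1) by (simp add: internal_sumI)
qed

lemma left_ideal_in_internal_sum:
  assumes gr: "graded_ring Sg" and x: "x \<in> setmul UNIV (Sg g)"
  shows "x \<in> internal_sum (\<lambda>h. setmul (Sg (h - g)) (Sg g))"
proof -
  obtain n a b where ab: "\<And>i. i < (n::nat) \<Longrightarrow> a i \<in> UNIV \<and> b i \<in> Sg g" "x = (\<Sum>i<n. a i * b i)"
    using x by (erule setmulE)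
  show ?thesis
    unfolding ab(2) using ab(1) mult_homogeneous_in_internal_sum[OF gr]
    by (intro internal_sum_sum) (auto simp: setmul_zero setmul_add)
qed

lemma left_ideal_homogeneous_component:
  assumes gr: "graded_ring Sg" and H: "finite H" "\<And>h. h \<in> H \<Longrightarrow> c h \<in> Sg h"
    and sum: "sum c H \<in> setmul UNIV (Sg g)" and h: "h \<in> H"
  shows "c h \<in> setmul (Sg (h - g)) (Sg g)"
proof -
  obtain F l where F: "finite F" "\<And>k. k \<in> F \<Longrightarrow> l k \<in> setmul (Sg (k - g)) (Sg g)" "sum c H = sum l F"
    using left_ideal_in_internal_sum[OF gr sum] by (erule internal_sumE)
  have "l k \<in> Sg k" if "k \<in> F" for k
    using F(2)[OF that] graded_setmul_subset[OF gr, of "k - g" g] by auto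
  hence "c h = (if h \<in> F then l h else 0)"
    using graded_ring_component_eq[OF gr H(1) F(1) H(2) _ F(3) h] by blast
  thus ?thesis using F(2) by (simp add: setmul_zero)
qed

text \<open>The quotient \<open>S/L\<close> by a left ideal \<open>L\<close>, realised inside the type \<open>'m\<close>: each coset is
  represented by a chosen element, which is then embedded into \<open>'m\<close> by the injection \<open>f\<close>.\<close>

locale left_ideal_quotient =
  fixes L :: "'a::ring_1 set" and f :: "'a \<Rightarrow> 'm"
  assumes zero_mem: "0 \<in> L"
    and add_mem: "\<And>x y. x \<in> L \<Longrightarrow> y \<in> L \<Longrightarrow> x + y \<in> L"
    and minus_mem: "\<And>x. x \<in> L \<Longrightarrow> - x \<in> L"
    and mult_mem: "\<And>x s. x \<in> L \<Longrightarrow> s * x \<in> L"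
    and inj_f: "inj f"
begin

definition rep :: "'a \<Rightarrow> 'a" where "rep x = (SOME y. x - y \<in> L)"
definition cls :: "'a \<Rightarrow> 'm" where "cls x = f (rep x)"
definition qadd :: "'m \<Rightarrow> 'm \<Rightarrow> 'm" where "qadd m n = cls (inv f m + inv f n)"
definition qsmult :: "'a \<Rightarrow> 'm \<Rightarrow> 'm" where "qsmult a m = cls (a * inv f m)"

lemma diff_mem: "x \<in> L \<Longrightarrow> y \<in> L \<Longrightarrow> x - y \<in> L"
  using add_mem minus_mem by (metis diff_conv_add_uminus)

lemma diff_rep_mem: "x - rep x \<in> L"
proof -
  have "x - x \<in> L" using zero_mem by simp
  thus ?thesis unfolding rep_def by (rule someI)
qed

lemma rep_eq_if_diff_mem:
  assumes "x - y \<in> L"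
  shows "rep x = rep y"
proof -
  have "x - w \<in> L \<longleftrightarrow> y - w \<in> L" for w
  proof
    assume "x - w \<in> L"
    hence "(x - w) - (x - y) \<in> L" using assms diff_mem by blast
    thus "y - w \<in> L" by (simp add: algebra_simps)
  next
    assume "y - w \<in> L"
    hence "(x - y) + (y - w) \<in> L" using assms add_mem by blast
    thus "x - w \<in> L" by (simp add: algebra_simps)
  qed
  thus ?thesis unfolding rep_def by simp
qed

lemma cls_eq_iff: "cls x = cls y \<longleftrightarrow> x - y \<in> L"
proof
  assume "cls x = cls y"
  hence "rep x = rep y" using inj_f unfolding cls_def by (simp add: inj_eq)
  moreover have "(x - rep x) - (y - rep y) \<in> L" using diff_rep_mem diff_mem by blast
  ultimately show "x - y \<in> L" by (simp add: algebra_simps)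
next
  assume "x - y \<in> L"
  thus "cls x = cls y" unfolding cls_def by (simp add: rep_eq_if_diff_mem)
qed

lemma inv_f_cls: "inv f (cls x) = rep x"
  unfolding cls_def using inj_f by simp

lemma qadd_cls: "qadd (cls x) (cls y) = cls (x + y)"
proof -
  have "(x - rep x) + (y - rep y) \<in> L" using diff_rep_mem add_mem by blast
  hence "(rep x + rep y) - (x + y) \<in> L" using minus_mem by (fastforce simp: algebra_simps)
  thus ?thesis unfolding qadd_def inv_f_cls cls_eq_iff .
qed

lemma qsmult_cls: "qsmult a (cls x) = cls (a * x)"
proof -
  have "- (a * (x - rep x)) \<in> L" using diff_rep_mem mult_mem minus_mem by blast
  hence "a * rep x - a * x \<in> L" by (simp add: algebra_simps)
  thus ?thesis unfolding qsmult_def inv_f_cls cls_eq_iff .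
qed

lemma msum_map_cls: "msum qadd (cls 0) (map (cls \<circ> c) xs) = cls (\<Sum>x\<leftarrow>xs. c x)"
  by (induction xs) (simp_all add: msum_def qadd_cls)

lemma left_module_quotient: "left_module (range cls) qadd (cls 0) qsmult"
proof -
  have "\<exists>y. cls (x + y) = cls 0" for x by (rule exI[where x="- x"]) simp
  thus ?thesis unfolding left_module_def
    by (auto simp: qadd_cls qsmult_cls algebra_simps distrib_right mult.assoc)
qed

end

lemma list_eq_map_if_distinct:
  assumes "distinct hs" "length xs = length hs" "\<And>i. i < length hs \<Longrightarrow> P (hs ! i) (xs ! i)"
  obtains b where "\<And>h. h \<in> set hs \<Longrightarrow> P h (b h)" "xs = map b hs"
proof
  let ?b = "\<lambda>h. the (map_of (zip hs xs) h)"
  have b: "?b (hs ! i) = xs ! i" if "i < length hs" for i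
    using map_of_zip_nth[of hs xs i] assms(1,2) that by simp
  show "P h (?b h)" if "h \<in> set hs" for h
    using that b assms(3) by (metis in_set_conv_nth)
  show "xs = map ?b hs"
    using b assms(2) by (simp add: list_eq_iff_nth_eq)
qed

locale graded_quotient =
  fixes Sg :: "'g::group_add \<Rightarrow> 'a::ring_1 set" and g :: 'g and f :: "'a \<Rightarrow> 'm"
  assumes graded: "graded_ring Sg" and injective: "inj f"
begin

sublocale left_ideal_quotient "setmul UNIV (Sg g)" f
  by unfold_locales (auto simp: setmul_zero setmul_add left_ideal_minus left_ideal_mult injective)

definition grading :: "'g \<Rightarrow> 'm set" where "grading h = cls ` Sg h"

lemma grading_decomp:
  "\<exists>hs xs. length xs = length hs \<and> (\<forall>i<length hs. xs ! i \<in> grading (hs ! i)) \<and>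
     cls x = msum qadd (cls 0) xs"
proof -
  obtain K c where K: "finite K" "\<And>h. h \<in> K \<Longrightarrow> c h \<in> Sg h" "x = sum c K"
    using graded_ring_decomp[OF graded, of x] by (erule internal_sumE)
  obtain hs where hs: "set hs = K" "distinct hs" using finite_distinct_list[OF K(1)] by blast
  have "cls x = msum qadd (cls 0) (map (cls \<circ> c) hs)"
    using hs K(3) by (simp add: msum_map_cls sum_list_distinct_conv_sum_set)
  moreover have "\<forall>i<length hs. map (cls \<circ> c) hs ! i \<in> grading (hs ! i)"
    using K(2) hs(1) by (auto simp: grading_def)
  ultimately show ?thesis by (metis length_map)
qed

lemma grading_independent:
  assumes hs: "distinct hs" "length xs = length hs" "\<forall>i<length hs. xs ! i \<in> grading (hs ! i)"
    and sum: "msum qadd (cls 0) xs = cls 0" and i: "i < length hs"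
  shows "xs ! i = cls 0"
proof -
  obtain b where b: "\<And>h. h \<in> set hs \<Longrightarrow> b h \<in> grading h" "xs = map b hs"
    using list_eq_map_if_distinct[of hs xs "\<lambda>h x. x \<in> grading h"] hs by blast
  have "\<forall>h\<in>set hs. \<exists>y. y \<in> Sg h \<and> b h = cls y" using b(1) by (auto simp: grading_def)
  from bchoice[OF this] obtain c where c: "\<forall>h\<in>set hs. c h \<in> Sg h \<and> b h = cls (c h)" by blast
  have "xs = map (cls \<circ> c) hs" using b(2) c by simp
  hence "cls (sum c (set hs)) = cls 0"
    using sum hs(1) by (simp add: msum_map_cls sum_list_distinct_conv_sum_set)
  hence "sum c (set hs) \<in> setmul UNIV (Sg g)" by (simp add: cls_eq_iff)
  hence "c (hs ! i) \<in> setmul (Sg (hs ! i - g)) (Sg g)"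
    using left_ideal_homogeneous_component[OF graded, of "set hs" c g "hs ! i"] c i by simp
  hence "cls (c (hs ! i)) = cls 0"
    using setmul_subset_left_ideal by (auto simp: cls_eq_iff)
  thus ?thesis using b(2) c i by simp
qed

lemma graded_left_module_quotient: "graded_left_module Sg (range cls) qadd (cls 0) qsmult grading"
proof -
  have subgroups: "\<forall>h. grading h \<subseteq> range cls \<and> cls 0 \<in> grading h \<and>
      (\<forall>x\<in>grading h. \<forall>y\<in>grading h. qadd x y \<in> grading h) \<and>
      (\<forall>x\<in>grading h. \<exists>y\<in>grading h. qadd x y = cls 0)"
  proof (intro allI conjI ballI)
    fix h
    show "grading h \<subseteq> range cls" "cls 0 \<in> grading h"
      using graded_ring_zero[OF graded] by (auto simp: grading_def)
    show "qadd x y \<in> grading h" if "x \<in> grading h" "y \<in> grading h" for x y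
      using that graded_ring_add[OF graded] by (auto simp: grading_def qadd_cls)
    show "\<exists>y\<in>grading h. qadd x y = cls 0" if x: "x \<in> grading h" for x
    proof -
      obtain u where "u \<in> Sg h" "x = cls u" using x by (auto simp: grading_def)
      thus ?thesis using graded_ring_minus[OF graded]
        by (intro bexI[of _ "cls (- u)"]) (auto simp: grading_def qadd_cls)
    qed
  qed
  have action: "\<forall>g h. \<forall>s\<in>Sg g. \<forall>x\<in>grading h. qsmult s x \<in> grading (g + h)"
    using graded_ring_mult[OF graded] by (auto simp: grading_def qsmult_cls)
  have decomp: "\<forall>x\<in>range cls. \<exists>hs xs. length xs = length hs \<and>
      (\<forall>i<length hs. xs ! i \<in> grading (hs ! i)) \<and> x = msum qadd (cls 0) xs"
  proof
    fix x assume "x \<in> range cls"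
    then obtain y where "x = cls y" by blast
    thus "\<exists>hs xs. length xs = length hs \<and> (\<forall>i<length hs. xs ! i \<in> grading (hs ! i)) \<and>
        x = msum qadd (cls 0) xs"
      using grading_decomp[of y] by simp
  qed
  have independent: "\<forall>hs xs. distinct hs \<and> length xs = length hs \<and>
      (\<forall>i<length hs. xs ! i \<in> grading (hs ! i)) \<and> msum qadd (cls 0) xs = cls 0 \<longrightarrow>
      (\<forall>i<length hs. xs ! i = cls 0)"
    using grading_independent by (intro allI impI) (elim conjE, blast)
  show ?thesis
    unfolding graded_left_module_def
    using left_module_quotient subgroups action decomp independent by (intro conjI)
qed

lemma msum_smult_mem_grading:
  "\<forall>p\<in>set ps. fst p \<in> setmul (Sg h) (Sg (- h)) \<and> snd p \<in> grading h \<Longrightarrow>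
     msum qadd (cls 0) (map (\<lambda>(s, x). qsmult s x) ps) \<in> grading h"
proof (induction ps)
  case Nil
  thus ?case using graded_ring_zero[OF graded] by (simp add: msum_def grading_def)
next
  case (Cons p ps)
  obtain s m where p: "p = (s, m)" by (cases p)
  have s: "s \<in> Sg 0" using Cons.prems p graded_setmul_subset[OF graded, of h "- h"] by auto
  obtain y where y: "m = cls y" "y \<in> Sg h" using Cons.prems p by (auto simp: grading_def)
  obtain w where w: "msum qadd (cls 0) (map (\<lambda>(s, x). qsmult s x) ps) = cls w" "w \<in> Sg h"
    using Cons by (auto simp: grading_def)
  have "s * y + w \<in> Sg h"
    using graded_ring_mult[OF graded s y(2)] w(2) graded_ring_add[OF graded] by simp
  thus ?case using p y w by (simp add: msum_def qsmult_cls qadd_cls grading_def)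
qed

lemma sym_graded_module_quotient:
  assumes sym: "symmetrically_graded Sg"
  shows "sym_graded_module Sg qadd (cls 0) qsmult grading"
  unfolding sym_graded_module_def
proof (intro allI equalityI subsetI)
  fix h x assume "x \<in> grading h"
  then obtain y where y: "x = cls y" "y \<in> setmul (setmul (Sg h) (Sg (- h))) (Sg h)"
    using sym unfolding grading_def symmetrically_graded_def by auto
  obtain n p t where pt: "\<And>i. i < (n::nat) \<Longrightarrow> p i \<in> setmul (Sg h) (Sg (- h)) \<and> t i \<in> Sg h"
    "y = (\<Sum>i<n. p i * t i)"
    using y(2) by (erule setmulE)
  define ps where "ps = map (\<lambda>i. (p i, cls (t i))) [0..<n]"
  have "map (\<lambda>(s, x). qsmult s x) ps = map (cls \<circ> (\<lambda>i. p i * t i)) [0..<n]"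
    by (simp add: ps_def qsmult_cls)
  hence "x = msum qadd (cls 0) (map (\<lambda>(s, x). qsmult s x) ps)"
    using y(1) pt(2) by (simp add: msum_map_cls sum_list_sum_nth atLeast0LessThan)
  moreover have "\<forall>q\<in>set ps. fst q \<in> setmul (Sg h) (Sg (- h)) \<and> snd q \<in> grading h"
    using pt(1) by (auto simp: ps_def grading_def)
  ultimately show "x \<in> setsmul qadd (cls 0) qsmult (setmul (Sg h) (Sg (- h))) (grading h)"
    unfolding setsmul_def by blast
next
  fix h x assume "x \<in> setsmul qadd (cls 0) qsmult (setmul (Sg h) (Sg (- h))) (grading h)"
  thus "x \<in> grading h" unfolding setsmul_def using msum_smult_mem_grading by blast
qed

lemma grading_trivial: "grading g = {cls 0}"
proof -
  have "cls y = cls 0" if "y \<in> Sg g" for y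
    using mult_in_setmul[of 1 UNIV y "Sg g"] that by (simp add: cls_eq_iff)
  thus ?thesis using graded_ring_zero[OF graded] unfolding grading_def by blast
qed

lemma one_in_setmul_if_quotient_trivial:
  assumes "range cls = {cls 0}"
  shows "1 \<in> setmul (Sg (- g)) (Sg g)"
proof -
  have "cls 1 = cls 0" using assms by blast
  hence "1 \<in> setmul UNIV (Sg g)" by (simp add: cls_eq_iff)
  thus ?thesis
    using left_ideal_homogeneous_component[OF graded, of "{0}" "\<lambda>_. 1"] graded_ring_one[OF graded]
    by simp
qed

end

lemma one_in_setmul_if_modules_trivial:
  fixes Sg :: "'g::group_add \<Rightarrow> 'a::ring_1 set" and f :: "'a \<Rightarrow> 'm"
  assumes gr: "graded_ring Sg" and sym: "symmetrically_graded Sg" and inj_f: "inj f"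
    and trivial: "\<forall>g (M :: 'm set) add z sm Mg.
              graded_left_module Sg M add z sm Mg \<and> sym_graded_module Sg add z sm Mg \<and>
              Mg g = {z} \<longrightarrow> M = {z}"
  shows "1 \<in> setmul (Sg (- g)) (Sg g)"
proof -
  interpret graded_quotient Sg g f using gr inj_f by unfold_locales
  have "range cls = {cls 0}"
    using trivial[rule_format, OF conjI[OF graded_left_module_quotient
        conjI[OF sym_graded_module_quotient[OF sym] grading_trivial]]] .
  thus ?thesis by (rule one_in_setmul_if_quotient_trivial)
qed

theorem mainTheorem6:
  fixes Sg :: "'g::group_add \<Rightarrow> 'a::ring_1 set"
  assumes "graded_ring Sg"
    and "\<exists>f :: 'a \<Rightarrow> 'm. inj f"
  shows "strongly_graded Sg \<longleftrightarrow>
           symmetrically_graded Sg \<and>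
           (\<forall>g (M :: 'm set) add z sm Mg.
              graded_left_module Sg M add z sm Mg \<and> sym_graded_module Sg add z sm Mg \<and>
              Mg g = {z} \<longrightarrow> M = {z})"
proof (intro iffI conjI allI impI)
  assume strong: "strongly_graded Sg"
  thus "symmetrically_graded Sg" by (rule strongly_graded_imp_symmetrically_graded)
  have one: "\<And>k. 1 \<in> setmul (Sg k) (Sg (- k))"
    using strong strongly_graded_iff_one_in_setmul[OF assms(1)] by simp
  fix g and M :: "'m set" and add z sm Mg
  assume "graded_left_module Sg M add z sm Mg \<and> sym_graded_module Sg add z sm Mg \<and> Mg g = {z}"
  thus "M = {z}"
    by (elim conjE) (rule graded_module_trivial_if_component_trivial[where Sg=Sg, OF _ one])
next
  assume modules: "symmetrically_graded Sg \<and>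
      (\<forall>g (M :: 'm set) add z sm Mg.
         graded_left_module Sg M add z sm Mg \<and> sym_graded_module Sg add z sm Mg \<and>
         Mg g = {z} \<longrightarrow> M = {z})"
  obtain f :: "'a \<Rightarrow> 'm" where f: "inj f" using assms(2) by blast
  have "1 \<in> setmul (Sg (- (- g))) (Sg (- g))" for g
    by (rule one_in_setmul_if_modules_trivial[OF assms(1) conjunct1[OF modules] f conjunct2[OF modules]])
  thus "strongly_graded Sg"
    using strongly_graded_iff_one_in_setmul[OF assms(1)] by simp
qed

end
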